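(* Let $n,m$ be positive integers, $\lambda\in\mathcal{P}^m_n$, and let $k_{i,j}=k_{i,j}(\lambda)$ be defined recursively by $$k_{i,j}=\min\left\{m,\left\lceil\frac{\lambda_i-\sum_{\ell=j+1}^n k_{i,\ell}+\sum_{\ell=i+1}^j k_{\ell,j}}{j-i+1}\right\rceil\right\},\quad 1\le i\le j\le n.$$ Then $k_{i,j}\ge k_{i+1,j}$ for all $1\le i<j\le n$.
   Context: $\mathcal{P}^m_n$ is the set of integer partitions $(\lambda_1\ge\cdots\ge\lambda_n\ge0)$ with $\lambda_i\le m(n-i+1)$ for all $i$. The recursion is carried out in order of decreasing $i$ and, for fixed $i$, decreasing $j$. *)

theory Defs
  imports Complex_Main
begin

definition in_Pmn :: "nat \<Rightarrow> nat \<Rightarrow> (nat \<Rightarrow> nat) \<Rightarrow> bool" where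
  "in_Pmn m n lam \<longleftrightarrow>
     (\<forall>i. 1 \<le> i \<and> i < n \<longrightarrow> lam (i+1) \<le> lam i) \<and>
     (\<forall>i. 1 \<le> i \<and> i \<le> n \<longrightarrow> lam i \<le> m * (n - i + 1))"

function kval :: "nat \<Rightarrow> nat \<Rightarrow> (nat \<Rightarrow> nat) \<Rightarrow> nat \<Rightarrow> nat \<Rightarrow> int" where
  "kval n m lam i j =
     (if 1 \<le> i \<and> i \<le> j \<and> j \<le> n then
        min (int m)
          \<lceil>(real (lam i) - (\<Sum>l\<in>{j+1..n}. real_of_int (kval n m lam i l))
             + (\<Sum>l\<in>{i+1..j}. real_of_int (kval n m lam l j))) / real (j - i + 1)\<rceil>
      else 0)"
  by pat_completeness auto
termination
  by (relation "measures [\<lambda>(n,m,lam,i,j). n - i, \<lambda>(n,m,lam,i,j). n - j]") auto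

end

theory Submission
  imports Defs
begin

text \<open>Let r_i(j) = lambda_i - sum_{l > j} k_{i,l} be what remains of row i once the entries
  right of column j are fixed. The column sum in the recursion for k_{i,j} is k_{i+1,j} plus the
  column sum in the recursion for k_{i+1,j}, so an arithmetic property of capped ceilings shows:
  if r_i(j) >= r_{i+1}(j), then k_{i,j} >= k_{i+1,j} and r_i(j-1) >= r_{i+1}(j-1).
  Since r_i(n) = lambda_i >= lambda_{i+1} = r_{i+1}(n), downward induction on j gives the claim.\<close>

declare kval.simps[simp del]

lemma ceiling_divide_bounds:
  fixes X :: int and d :: nat
  assumes "d > 0"
  shows "int d * (\<lceil>real_of_int X / real d\<rceil> - 1) < X"
    and "X \<le> int d * \<lceil>real_of_int X / real d\<rceil>"
proof -
  let ?c = "\<lceil>real_of_int X / real d\<rceil>"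
  have d: "real d > 0" using assms by simp
  have "real_of_int ?c - 1 < real_of_int X / real d" by linarith
  then have "real d * (real_of_int ?c - 1) < real_of_int X"
    using d by (simp add: field_simps)
  then have "real_of_int (int d * (?c - 1)) < real_of_int X" by simp
  then show "int d * (?c - 1) < X" by linarith
  have "real_of_int X / real d \<le> real_of_int ?c" by linarith
  then have "real_of_int X \<le> real d * real_of_int ?c"
    by (metis d pos_divide_le_eq mult.commute)
  then have "real_of_int X \<le> real_of_int (int d * ?c)" by simp
  then show "X \<le> int d * ?c" by linarith
qed

lemma min_ceiling_divide_bounds:
  fixes X M :: int and d :: nat
  assumes "d > 0"
  defines "c \<equiv> min M \<lceil>real_of_int X / real d\<rceil>"
  shows "c \<le> M"
    and "int d * (c - 1) < X"
    and "c < M \<Longrightarrow> X \<le> int d * c"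
proof -
  note b = ceiling_divide_bounds[OF assms(1), of X]
  show "c \<le> M" unfolding c_def by simp
  have "int d * (c - 1) \<le> int d * (\<lceil>real_of_int X / real d\<rceil> - 1)"
    unfolding c_def by (intro mult_left_mono) auto
  then show "int d * (c - 1) < X" using b(1) by linarith
  show "c < M \<Longrightarrow> X \<le> int d * c" using b(2) unfolding c_def by simp
qed

text \<open>In the application k' = k_{i+1,j}, k = k_{i,j}, s = j - i, the budgets A, A' are the
  residuals of rows i, i+1, and C is the column sum below row i+1.\<close>

lemma min_ceiling_divide_step:
  fixes A A' C M :: int and s :: nat
  assumes "s > 0" and "A' \<le> A"
  defines "k' \<equiv> min M \<lceil>real_of_int (A' + C) / real s\<rceil>"
  defines "k \<equiv> min M \<lceil>real_of_int (A + k' + C) / real (s + 1)\<rceil>"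
  shows "k' \<le> k" and "A' - k' \<le> A - k"
proof -
  have "s + 1 > 0" by simp
  note b = min_ceiling_divide_bounds[OF this, where X = "A + k' + C" and M = M, folded k_def]
  note b' = min_ceiling_divide_bounds[OF assms(1), where X = "A' + C" and M = M, folded k'_def]
  show "k' \<le> k"
  proof (rule ccontr)
    assume "\<not> k' \<le> k"
    then have "k \<le> k' - 1" by simp
    then have "(int s + 1) * k \<le> (int s + 1) * (k' - 1)" by (intro mult_left_mono) auto
    moreover have "k < M" using \<open>k \<le> k' - 1\<close> b'(1) by simp
    ultimately show False using b(3)[OF \<open>k < M\<close>] b'(2) \<open>A' \<le> A\<close>
      by (simp add: algebra_simps)
  qed
  show "A' - k' \<le> A - k"
  proof (cases "k = k'")
    case False
    with \<open>k' \<le> k\<close> have "k' < k" by simp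
    then have "k' < M" using b(1) by simp
    have "0 \<le> int s * (k - 1 - k')" using \<open>k' < k\<close> by simp
    then show ?thesis using b(2) b'(3)[OF \<open>k' < M\<close>] by (simp add: algebra_simps)
  qed (use assms(2) in simp)
qed

definition residual :: "nat \<Rightarrow> nat \<Rightarrow> (nat \<Rightarrow> nat) \<Rightarrow> nat \<Rightarrow> nat \<Rightarrow> int" where
  "residual n m lam i j = int (lam i) - (\<Sum>l\<in>{j+1..n}. kval n m lam i l)"

lemma kval_eq_min_ceiling:
  assumes "1 \<le> i" "i \<le> j" "j \<le> n"
  shows "kval n m lam i j = min (int m)
    \<lceil>real_of_int (residual n m lam i j + (\<Sum>l\<in>{i+1..j}. kval n m lam l j)) / real (j - i + 1)\<rceil>"
  using assms by (subst kval.simps) (simp add: residual_def)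

lemma residual_Suc:
  assumes "j < n"
  shows "residual n m lam i j = residual n m lam i (Suc j) - kval n m lam i (Suc j)"
  using assms by (simp add: residual_def sum.atLeast_Suc_atMost)

lemma kval_row_step:
  assumes "1 \<le> i" "i < j" "j \<le> n"
    and "residual n m lam (i+1) j \<le> residual n m lam i j"
  shows "kval n m lam (i+1) j \<le> kval n m lam i j"
    and "residual n m lam (i+1) j - kval n m lam (i+1) j
           \<le> residual n m lam i j - kval n m lam i j"
proof -
  define C where "C = (\<Sum>l\<in>{i+2..j}. kval n m lam l j)"
  have "(\<Sum>l\<in>{i+1..j}. kval n m lam l j) = kval n m lam (i+1) j + C"
    unfolding C_def using assms(2) by (simp add: sum.atLeast_Suc_atMost numeral_2_eq_2)
  then have k: "kval n m lam i j = min (int m)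
      \<lceil>real_of_int (residual n m lam i j + kval n m lam (i+1) j + C) / real (j - i + 1)\<rceil>"
    using kval_eq_min_ceiling[of i j n m lam] assms by (simp add: add.assoc)
  have k': "kval n m lam (i+1) j = min (int m)
      \<lceil>real_of_int (residual n m lam (i+1) j + C) / real (j - i)\<rceil>"
    using kval_eq_min_ceiling[of "i+1" j n m lam] assms
    by (simp add: C_def Suc_diff_Suc numeral_2_eq_2)
  have "j - i > 0" using assms(2) by simp
  from min_ceiling_divide_step[OF this assms(4), where C = C and M = "int m"]
  show "kval n m lam (i+1) j \<le> kval n m lam i j"
    and "residual n m lam (i+1) j - kval n m lam (i+1) j
           \<le> residual n m lam i j - kval n m lam i j"
    unfolding k'[symmetric] k[symmetric] by simp_all
qed

lemma residual_mono_row: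
  assumes "1 \<le> i" "i < j" "j \<le> n" and "lam (i+1) \<le> lam i"
  shows "residual n m lam (i+1) j \<le> residual n m lam i j"
  using assms(3,2)
proof (induction j rule: inc_induct)
  case base
  then show ?case using assms(4) by (simp add: residual_def)
next
  case (step j)
  have "i < Suc j" "Suc j \<le> n" using step by auto
  with kval_row_step(2)[OF assms(1) this step.IH] step.hyps show ?case
    by (simp add: residual_Suc)
qed

theorem lemma4p6:
  fixes n m :: nat and lam :: "nat \<Rightarrow> nat"
  assumes "n > 0" and "m > 0" and "in_Pmn m n lam"
  shows "\<forall>i j. 1 \<le> i \<and> i < j \<and> j \<le> n \<longrightarrow> kval n m lam i j \<ge> kval n m lam (i+1) j"
proof (intro allI impI)
  fix i j assume ij: "1 \<le> i \<and> i < j \<and> j \<le> n"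
  then have "lam (i+1) \<le> lam i" using assms(3) unfolding in_Pmn_def by auto
  with ij have "residual n m lam (i+1) j \<le> residual n m lam i j"
    by (intro residual_mono_row) auto
  with ij show "kval n m lam i j \<ge> kval n m lam (i+1) j"
    using kval_row_step(1) by blast
qed

end
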